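(* Let $R$ be a countable, cotorsion-free commutative ring. Let $G$ be an almost full embedding of a category of graphs into a category of torsion-free $R$-modules, i.e. a functor such that for all graphs $X,Y$ in its domain the map $\gamma:R[\mathrm{Hom}_{\mathcal{G}raphs}(X,Y)]\to\mathrm{Hom}_R(GX,GY)$, $\sum r_\varphi\varphi\mapsto\sum r_\varphi G\varphi$, is an isomorphism. If $\mathrm{Hom}_{\mathcal{G}raphs}(X,Y)$ is uncountable, then $GX$ or $GY$ is uncountable.
   Context: A graph is a set with a binary relation; graph morphisms are relation-preserving functions. $R[S]$ denotes the free $R$-module with basis $S$. An $R$-module is torsion-free if $bs=0$ with $s\ne0$ implies $b=0$. Cotorsion-free is with respect to a countable multiplicative subset $\mathbb{S}\subseteq R$ ($0\notin\mathbb{S}$, $1\in\mathbb{S}$): $R$ is $\mathbb{S}$-reduced ($\bigcap_{s\in\mathbb{S}}sR=0$), $\mathbb{S}$-torsion-free, and $\mathrm{Hom}_R(\widehat R,R)=0$ for the $\mathbb{S}$-adic completion $\widehat R$. *)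

theory Defs
  imports "HOL-Algebra.Algebra" "HOL-Library.Countable_Set" "HOL-Library.FuncSet"
begin

type_synonym 'v graph = "'v set \<times> ('v \<times> 'v) set"

definition is_graph :: "'v graph \<Rightarrow> bool" where
  "is_graph gX \<longleftrightarrow> snd gX \<subseteq> Sigma (fst gX) (\<lambda>_. fst gX)"

definition graph_hom :: "'v graph \<Rightarrow> 'v graph \<Rightarrow> ('v \<Rightarrow> 'v) set" where
  "graph_hom gX gY = {f. f \<in> fst gX \<rightarrow>\<^sub>E fst gY \<and>
                       (\<forall>u v. (u, v) \<in> snd gX \<longrightarrow> (f u, f v) \<in> snd gY)}"

definition lin_hom :: "'r ring \<Rightarrow> ('r, 'm) module \<Rightarrow> ('r, 'n) module \<Rightarrow> ('m \<Rightarrow> 'n) set" where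
  "lin_hom R M N = {h. h \<in> carrier M \<rightarrow>\<^sub>E carrier N \<and>
     (\<forall>x\<in>carrier M. \<forall>y\<in>carrier M. h (x \<oplus>\<^bsub>M\<^esub> y) = h x \<oplus>\<^bsub>N\<^esub> h y) \<and>
     (\<forall>r\<in>carrier R. \<forall>x\<in>carrier M. h (r \<odot>\<^bsub>M\<^esub> x) = r \<odot>\<^bsub>N\<^esub> h x)}"

definition torsion_free_module :: "'r ring \<Rightarrow> ('r, 'm) module \<Rightarrow> bool" where
  "torsion_free_module R M \<longleftrightarrow> module R M \<and>
     (\<forall>b\<in>carrier R. \<forall>s\<in>carrier M. b \<odot>\<^bsub>M\<^esub> s = \<zero>\<^bsub>M\<^esub> \<and> s \<noteq> \<zero>\<^bsub>M\<^esub> \<longrightarrow> b = \<zero>\<^bsub>R\<^esub>)"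

text \<open>The free R-module R[S]: finitely supported R-valued functions on S.\<close>
definition free_mod :: "'r ring \<Rightarrow> 'a set \<Rightarrow> ('a \<Rightarrow> 'r) set" where
  "free_mod R S = {c. c \<in> S \<rightarrow>\<^sub>E carrier R \<and> finite {x\<in>S. c x \<noteq> \<zero>\<^bsub>R\<^esub>}}"

definition mult_subset :: "'r ring \<Rightarrow> 'r set \<Rightarrow> bool" where
  "mult_subset R S \<longleftrightarrow> S \<subseteq> carrier R \<and> \<one>\<^bsub>R\<^esub> \<in> S \<and> \<zero>\<^bsub>R\<^esub> \<notin> S \<and>
     (\<forall>s\<in>S. \<forall>t\<in>S. s \<otimes>\<^bsub>R\<^esub> t \<in> S)"

definition S_reduced :: "'r ring \<Rightarrow> 'r set \<Rightarrow> bool" where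
  "S_reduced R S \<longleftrightarrow> (\<Inter>s\<in>S. PIdl\<^bsub>R\<^esub> s) = {\<zero>\<^bsub>R\<^esub>}"

definition S_torsion_free :: "'r ring \<Rightarrow> 'r set \<Rightarrow> bool" where
  "S_torsion_free R S \<longleftrightarrow> (\<forall>s\<in>S. \<forall>r\<in>carrier R. s \<otimes>\<^bsub>R\<^esub> r = \<zero>\<^bsub>R\<^esub> \<longrightarrow> r = \<zero>\<^bsub>R\<^esub>)"

text \<open>The S-adic completion as the inverse limit of the R/sR (s in S, ordered by divisibility):
  compatible families of cosets x s in R/sR, i.e. x t is contained in x s whenever s divides t.\<close>
definition S_completion :: "'r ring \<Rightarrow> 'r set \<Rightarrow> ('r \<Rightarrow> 'r set) set" where
  "S_completion R S = {x. x \<in> (\<Pi>\<^sub>E s\<in>S. a_rcosets\<^bsub>R\<^esub> (PIdl\<^bsub>R\<^esub> s)) \<and>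
     (\<forall>s\<in>S. \<forall>t\<in>S. (\<exists>u\<in>carrier R. t = s \<otimes>\<^bsub>R\<^esub> u) \<longrightarrow> x t \<subseteq> x s)}"

definition compl_add :: "'r ring \<Rightarrow> 'r set \<Rightarrow> ('r \<Rightarrow> 'r set) \<Rightarrow> ('r \<Rightarrow> 'r set) \<Rightarrow> ('r \<Rightarrow> 'r set)" where
  "compl_add R S x y = (\<lambda>s\<in>S. x s <+>\<^bsub>R\<^esub> y s)"

definition compl_smult :: "'r ring \<Rightarrow> 'r set \<Rightarrow> 'r \<Rightarrow> ('r \<Rightarrow> 'r set) \<Rightarrow> ('r \<Rightarrow> 'r set)" where
  "compl_smult R S r x = (\<lambda>s\<in>S. PIdl\<^bsub>R\<^esub> s <+>\<^bsub>R\<^esub> ((\<lambda>a. r \<otimes>\<^bsub>R\<^esub> a) ` x s))"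

definition hom_completion_zero :: "'r ring \<Rightarrow> 'r set \<Rightarrow> bool" where
  "hom_completion_zero R S \<longleftrightarrow>
     (\<forall>f. f \<in> S_completion R S \<rightarrow> carrier R \<and>
          (\<forall>x\<in>S_completion R S. \<forall>y\<in>S_completion R S. f (compl_add R S x y) = f x \<oplus>\<^bsub>R\<^esub> f y) \<and>
          (\<forall>r\<in>carrier R. \<forall>x\<in>S_completion R S. f (compl_smult R S r x) = r \<otimes>\<^bsub>R\<^esub> f x)
       \<longrightarrow> (\<forall>x\<in>S_completion R S. f x = \<zero>\<^bsub>R\<^esub>))"

definition cotorsion_free :: "'r ring \<Rightarrow> bool" where
  "cotorsion_free R \<longleftrightarrow> (\<exists>S. countable S \<and> mult_subset R S \<and> S_reduced R S \<and>
       S_torsion_free R S \<and> hom_completion_zero R S)"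

text \<open>A functor from the full subcategory of graphs with object set C into torsion-free R-modules:
  GO on objects, GM gX gY on morphisms gX -> gY.\<close>
definition graph_module_functor ::
  "'r ring \<Rightarrow> 'v graph set \<Rightarrow> ('v graph \<Rightarrow> ('r, 'm) module) \<Rightarrow>
   ('v graph \<Rightarrow> 'v graph \<Rightarrow> ('v \<Rightarrow> 'v) \<Rightarrow> 'm \<Rightarrow> 'm) \<Rightarrow> bool" where
  "graph_module_functor R C GO GM \<longleftrightarrow>
     (\<forall>gX\<in>C. is_graph gX \<and> torsion_free_module R (GO gX)) \<and>
     (\<forall>gX\<in>C. \<forall>gY\<in>C. \<forall>\<phi>\<in>graph_hom gX gY.
        restrict (GM gX gY \<phi>) (carrier (GO gX)) \<in> lin_hom R (GO gX) (GO gY)) \<and>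
     (\<forall>gX\<in>C. \<forall>m\<in>carrier (GO gX). GM gX gX (restrict id (fst gX)) m = m) \<and>
     (\<forall>gX\<in>C. \<forall>gY\<in>C. \<forall>gZ\<in>C. \<forall>\<phi>\<in>graph_hom gX gY. \<forall>\<psi>\<in>graph_hom gY gZ. \<forall>m\<in>carrier (GO gX).
        GM gX gZ (restrict (\<psi> \<circ> \<phi>) (fst gX)) m = GM gY gZ \<psi> (GM gX gY \<phi> m))"

definition gamma_map ::
  "'r ring \<Rightarrow> ('v graph \<Rightarrow> ('r, 'm) module) \<Rightarrow>
   ('v graph \<Rightarrow> 'v graph \<Rightarrow> ('v \<Rightarrow> 'v) \<Rightarrow> 'm \<Rightarrow> 'm) \<Rightarrow> 'v graph \<Rightarrow> 'v graph \<Rightarrow>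
   (('v \<Rightarrow> 'v) \<Rightarrow> 'r) \<Rightarrow> 'm \<Rightarrow> 'm" where
  "gamma_map R GO GM gX gY c = (\<lambda>m\<in>carrier (GO gX).
     finsum (GO gY) (\<lambda>\<phi>. c \<phi> \<odot>\<^bsub>GO gY\<^esub> GM gX gY \<phi> m) {\<phi>\<in>graph_hom gX gY. c \<phi> \<noteq> \<zero>\<^bsub>R\<^esub>})"

definition almost_full_embedding ::
  "'r ring \<Rightarrow> 'v graph set \<Rightarrow> ('v graph \<Rightarrow> ('r, 'm) module) \<Rightarrow>
   ('v graph \<Rightarrow> 'v graph \<Rightarrow> ('v \<Rightarrow> 'v) \<Rightarrow> 'm \<Rightarrow> 'm) \<Rightarrow> bool" where
  "almost_full_embedding R C GO GM \<longleftrightarrow> graph_module_functor R C GO GM \<and>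
     (\<forall>gX\<in>C. \<forall>gY\<in>C. bij_betw (gamma_map R GO GM gX gY)
        (free_mod R (graph_hom gX gY)) (lin_hom R (GO gX) (GO gY)))"

end

theory Submission
  imports Defs
begin

(*
  Suppose GX and GY were both countable. Enumerating GX, the uncountability of Hom(X, Y) yields
  morphisms b_n, b'_n, all b_n distinct and no b_n equal to any b'_k, such that G b_n and G b'_n agree
  on the first n elements of GX. For every sequence a in R^N the series of the a_n (G b_n - G b'_n)
  is then pointwise a finite sum, hence an R-linear map GX -> GY, which by almost-fullness has
  finitely supported coordinates c_a in R[Hom(X, Y)]. The map a |-> c_a(b_j) - a_j is an R-linear
  functional on R^N vanishing on the unit sequences, and since c_1 has finite support it takes the
  value -1 at the constant sequence 1 for some j.
  Cotorsion-freeness rules such a functional out: it vanishes on all sequences with a_n in q_n R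
  for a chain q_0 | q_1 | ... cofinal in S, because S is reduced; so it induces a homomorphism from
  the S-adic completion to R, which is zero by Hom(R^, R) = 0, and evaluating at 1 gives a contradiction.
*)

section \<open>Functionals on sequences over a cotorsion-free ring\<close>

definition seq_functional :: "('r, 'b) ring_scheme \<Rightarrow> ((nat \<Rightarrow> 'r) \<Rightarrow> 'r) \<Rightarrow> bool" where
  "seq_functional R g \<longleftrightarrow>
     (\<forall>a \<in> UNIV \<rightarrow> carrier R. g a \<in> carrier R) \<and>
     (\<forall>a \<in> UNIV \<rightarrow> carrier R. \<forall>a' \<in> UNIV \<rightarrow> carrier R.
        g (\<lambda>n. a n \<oplus>\<^bsub>R\<^esub> a' n) = g a \<oplus>\<^bsub>R\<^esub> g a') \<and>
     (\<forall>r \<in> carrier R. \<forall>a \<in> UNIV \<rightarrow> carrier R. g (\<lambda>n. r \<otimes>\<^bsub>R\<^esub> a n) = r \<otimes>\<^bsub>R\<^esub> g a)"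

definition unit_seq :: "('r, 'b) ring_scheme \<Rightarrow> nat \<Rightarrow> nat \<Rightarrow> 'r" where
  "unit_seq R n = (\<lambda>k. if k = n then \<one>\<^bsub>R\<^esub> else \<zero>\<^bsub>R\<^esub>)"

lemma (in ring) unit_seq_closed: "unit_seq R n k \<in> carrier R"
  by (simp add: unit_seq_def)

lemma (in ring) minus_one_neq_zero: "\<one> \<noteq> \<zero> \<Longrightarrow> \<ominus> \<one> \<noteq> \<zero>"
  by (metis minus_minus minus_zero one_closed)

lemma (in cring) cgenideal_mult:
  "s \<in> carrier R \<Longrightarrow> r \<in> carrier R \<Longrightarrow> x \<in> PIdl s \<Longrightarrow> r \<otimes> x \<in> PIdl s"
  using cgenideal_ideal by (simp add: ideal.I_l_closed)

lemma (in cring) cgenideal_subset: "s \<in> carrier R \<Longrightarrow> PIdl s \<subseteq> carrier R"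
  using cgenideal_ideal by (meson ideal.Icarr subsetI)

locale cotorsion_witness = cring R for R :: "'r ring" (structure) +
  fixes S :: "'r set"
  assumes countable_S: "countable S" and mult_subset_S: "mult_subset R S"
    and reduced_S: "S_reduced R S" and completion_dual_trivial: "hom_completion_zero R S"
begin

lemma S_carrier: "S \<subseteq> carrier R" and one_in_S: "\<one> \<in> S" and zero_notin_S: "\<zero> \<notin> S"
  and S_mult_closed: "s \<in> S \<Longrightarrow> t \<in> S \<Longrightarrow> s \<otimes> t \<in> S"
  using mult_subset_S unfolding mult_subset_def by auto

lemma one_neq_zero: "\<one> \<noteq> \<zero>"
  using one_in_S zero_notin_S by auto

definition enum_S :: "nat \<Rightarrow> 'r" where
  "enum_S = from_nat_into S"

text \<open>The products of the first n elements of S form a divisibility chain that is cofinal in S,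
  so the S-adic topology is that of the ideals generated by them.\<close>
definition chain :: "nat \<Rightarrow> 'r" where
  "chain n = finprod R enum_S {..<n}"

lemma enum_S_in: "enum_S i \<in> S"
  unfolding enum_S_def using one_in_S by (auto intro: from_nat_into)

lemma chain_Suc: "chain (Suc n) = enum_S n \<otimes> chain n"
  unfolding chain_def lessThan_Suc using enum_S_in S_carrier by (subst finprod_insert) auto

lemma chain_in_S: "chain n \<in> S"
  by (induction n) (simp_all add: chain_def[of 0] one_in_S chain_Suc S_mult_closed enum_S_in)

lemma chain_closed: "chain n \<in> carrier R"
  using chain_in_S S_carrier by blast

lemma chain_dvd: "k \<le> n \<Longrightarrow> chain n \<in> PIdl (chain k)"
proof (induction n rule: dec_induct)
  case base
  show ?case using chain_closed by (rule cgenideal_self)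
next
  case (step n)
  then show ?case
    using chain_closed enum_S_in S_carrier by (auto simp: chain_Suc intro: cgenideal_mult)
qed

lemma chain_cofinal: "s \<in> S \<Longrightarrow> \<exists>j. chain j \<in> PIdl s"
proof -
  assume s: "s \<in> S"
  then obtain j where "enum_S j = s"
    using from_nat_into_surj[OF countable_S] unfolding enum_S_def by blast
  moreover have "s \<in> carrier R" using s S_carrier by blast
  ultimately have "chain (Suc j) = chain j \<otimes> s"
    using chain_closed by (simp add: chain_Suc m_comm)
  then show ?thesis
    using chain_closed by (auto simp: cgenideal_def)
qed

end

locale unit_killing_functional = cotorsion_witness R S for R :: "'r ring" (structure) and S +
  fixes g :: "(nat \<Rightarrow> 'r) \<Rightarrow> 'r"
  assumes functional: "seq_functional R g" and kills_units: "g (unit_seq R n) = \<zero>"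
begin

lemma g_closed: "(\<And>n. a n \<in> carrier R) \<Longrightarrow> g a \<in> carrier R"
  using functional unfolding seq_functional_def by blast

lemma g_add:
  "(\<And>n. a n \<in> carrier R) \<Longrightarrow> (\<And>n. a' n \<in> carrier R) \<Longrightarrow> g (\<lambda>n. a n \<oplus> a' n) = g a \<oplus> g a'"
  using functional unfolding seq_functional_def by blast

lemma g_smult: "r \<in> carrier R \<Longrightarrow> (\<And>n. a n \<in> carrier R) \<Longrightarrow> g (\<lambda>n. r \<otimes> a n) = r \<otimes> g a"
  using functional unfolding seq_functional_def by blast

lemma g_zero: "g (\<lambda>n. \<zero>) = \<zero>"
  using g_smult[of \<zero> "unit_seq R 0"] by (simp add: unit_seq_closed kills_units)

lemma g_truncation: "(\<And>n. a n \<in> carrier R) \<Longrightarrow> g (\<lambda>n. if n < k then a n else \<zero>) = \<zero>"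
proof (induction k)
  case 0
  then show ?case by (simp add: g_zero)
next
  case (Suc k)
  have "(\<lambda>n. if n < Suc k then a n else \<zero>) = (\<lambda>n. (if n < k then a n else \<zero>) \<oplus> a k \<otimes> unit_seq R k n)"
  proof
    fix n
    show "(if n < Suc k then a n else \<zero>) = (if n < k then a n else \<zero>) \<oplus> a k \<otimes> unit_seq R k n"
      using Suc.prems[of n] Suc.prems[of k] by (cases "n = k") (auto simp: unit_seq_def)
  qed
  then show ?case
    using Suc g_add[of "\<lambda>n. if n < k then a n else \<zero>" "\<lambda>n. a k \<otimes> unit_seq R k n"]
    by (simp add: g_smult unit_seq_closed kills_units)
qed

lemma g_chain_divisible:
  assumes a: "\<And>n. a n \<in> PIdl (chain n)"
  shows "g a \<in> PIdl (chain k)"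
proof -
  have a_closed: "a n \<in> carrier R" for n
    using a cgenideal_subset chain_closed by blast
  have "\<exists>t. t \<in> carrier R \<and> (k \<le> n \<longrightarrow> a n = chain k \<otimes> t)" for n
  proof (cases "k \<le> n")
    case True
    then have "a n \<in> PIdl (chain k)"
      using a cgenideal_minimal[OF cgenideal_ideal chain_dvd] chain_closed by blast
    then show ?thesis using chain_closed by (auto simp: cgenideal_def m_comm)
  qed auto
  then obtain t where t: "\<And>n. t n \<in> carrier R" "\<And>n. k \<le> n \<Longrightarrow> a n = chain k \<otimes> t n"
    using choice[of "\<lambda>n t. t \<in> carrier R \<and> (k \<le> n \<longrightarrow> a n = chain k \<otimes> t)"] by blast
  define head where "head n = (if n < k then a n else \<zero>)" for n
  define tail where "tail n = (if n < k then \<zero> else t n)" for n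
  have head_closed: "head n \<in> carrier R" and tail_closed: "tail n \<in> carrier R" for n
    using a_closed t(1) by (simp_all add: head_def tail_def)
  have "a = (\<lambda>n. head n \<oplus> chain k \<otimes> tail n)"
    using t a_closed chain_closed by (auto simp: head_def tail_def not_less)
  then have "g a = g head \<oplus> g (\<lambda>n. chain k \<otimes> tail n)"
    using g_add[OF head_closed, of "\<lambda>n. chain k \<otimes> tail n"] chain_closed tail_closed by simp
  also have "\<dots> = g head \<oplus> chain k \<otimes> g tail"
    by (simp add: g_smult chain_closed tail_closed)
  also have "\<dots> = chain k \<otimes> g tail"
    using g_truncation[OF a_closed] g_closed[OF tail_closed] chain_closed
    by (simp add: head_def[abs_def])
  finally show ?thesis
    using g_closed[OF tail_closed] chain_closed by (auto simp: cgenideal_def m_comm)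
qed

lemma g_vanishes_adically: "(\<And>n. a n \<in> PIdl (chain n)) \<Longrightarrow> g a = \<zero>"
proof -
  assume a: "\<And>n. a n \<in> PIdl (chain n)"
  have "g a \<in> PIdl s" if s: "s \<in> S" for s
  proof -
    obtain j where "chain j \<in> PIdl s" using chain_cofinal[OF s] by blast
    moreover have "s \<in> carrier R" using s S_carrier by blast
    ultimately have "PIdl (chain j) \<subseteq> PIdl s"
      using cgenideal_minimal[OF cgenideal_ideal] by blast
    then show ?thesis using g_chain_divisible[OF a] by blast
  qed
  then show ?thesis using reduced_S unfolding S_reduced_def by blast
qed

lemma g_adically_congruent:
  assumes "\<And>n. a n \<in> carrier R" "\<And>n. a' n \<in> carrier R" "\<And>n. a' n \<ominus> a n \<in> PIdl (chain n)"
  shows "g a' = g a"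
proof -
  have split: "a' = (\<lambda>n. a n \<oplus> (a' n \<ominus> a n))"
  proof
    fix n
    show "a' n = a n \<oplus> (a' n \<ominus> a n)"
      using assms(1,2)[of n] by (simp add: minus_eq a_lcomm[of "a n" "a' n"] r_neg)
  qed
  have "g a' = g a \<oplus> g (\<lambda>n. a' n \<ominus> a n)"
    using assms(1,2) by (subst split) (intro g_add, simp_all)
  then show ?thesis
    using g_vanishes_adically[OF assms(3)] g_closed[OF assms(1)] by simp
qed

lemma chain_ideal: "ideal (PIdl (chain n)) R"
  by (rule cgenideal_ideal[OF chain_closed])

definition rep where
  "rep x n = (SOME r. r \<in> x (chain n))"

lemma rep_mem: "r \<in> x (chain n) \<Longrightarrow> rep x n \<in> x (chain n)"
  unfolding rep_def by (rule someI)

lemma rep_congruent: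
  assumes u: "u \<in> carrier R" "u \<in> x (chain n)" and sub: "x (chain n) \<subseteq> PIdl (chain n) +> u"
  shows "rep x n \<in> carrier R" "rep x n \<ominus> u \<in> PIdl (chain n)"
proof -
  interpret I: ideal "PIdl (chain n)" R by (rule chain_ideal)
  have in_coset: "rep x n \<in> PIdl (chain n) +> u"
    using rep_mem[of u x n] u(2) sub by blast
  show r: "rep x n \<in> carrier R"
    by (rule I.a_elemrcos_carrier[OF u(1) in_coset])
  show "rep x n \<ominus> u \<in> PIdl (chain n)"
    using in_coset I.a_rcos_module_minus[OF ring_axioms u(1) r] by simp
qed

lemma rep_completion:
  assumes "x \<in> S_completion R S"
  shows "rep x n \<in> carrier R" "x (chain n) = PIdl (chain n) +> rep x n"
proof -
  interpret I: ideal "PIdl (chain n)" R by (rule chain_ideal)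
  have "x (chain n) \<in> a_rcosets (PIdl (chain n))"
    using assms chain_in_S unfolding S_completion_def by blast
  then obtain u where u: "u \<in> carrier R" "x (chain n) = PIdl (chain n) +> u"
    unfolding A_RCOSETS_def' by blast
  then have in_coset: "rep x n \<in> PIdl (chain n) +> u"
    using rep_mem I.a_rcos_self by metis
  show "rep x n \<in> carrier R"
    by (rule I.a_elemrcos_carrier[OF u(1) in_coset])
  show "x (chain n) = PIdl (chain n) +> rep x n"
    using I.a_repr_independence'[OF in_coset u(1)] u(2) by simp
qed

lemma rep_coset:
  assumes u: "u \<in> carrier R" and x: "x (chain n) = PIdl (chain n) +> u"
  shows "rep x n \<in> carrier R" "rep x n \<ominus> u \<in> PIdl (chain n)"
proof -
  interpret I: ideal "PIdl (chain n)" R by (rule chain_ideal)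
  have "u \<in> x (chain n)" unfolding x by (rule I.a_rcos_self[OF u])
  then show "rep x n \<in> carrier R" "rep x n \<ominus> u \<in> PIdl (chain n)"
    using rep_congruent[of u x n] u x by auto
qed

definition g_completion where
  "g_completion x = g (rep x)"

lemma g_completion_add:
  assumes x: "x \<in> S_completion R S" and y: "y \<in> S_completion R S"
  shows "g_completion (compl_add R S x y) = g_completion x \<oplus> g_completion y"
proof -
  let ?z = "compl_add R S x y"
  have rx: "\<And>n. rep x n \<in> carrier R" and ry: "\<And>n. rep y n \<in> carrier R"
    using rep_completion(1)[OF x] rep_completion(1)[OF y] .
  have "rep ?z n \<in> carrier R \<and> rep ?z n \<ominus> (rep x n \<oplus> rep y n) \<in> PIdl (chain n)" for n
  proof -
    interpret I: ideal "PIdl (chain n)" R by (rule chain_ideal)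
    have "?z (chain n) = (PIdl (chain n) +> rep x n) <+> (PIdl (chain n) +> rep y n)"
      using rep_completion(2)[OF x, of n] rep_completion(2)[OF y, of n] chain_in_S[of n]
      by (simp add: compl_add_def)
    also have "\<dots> = PIdl (chain n) +> (rep x n \<oplus> rep y n)"
      by (rule I.a_rcos_sum[OF rx ry])
    finally show ?thesis
      using rep_coset[of "rep x n \<oplus> rep y n" ?z n] rx ry by simp
  qed
  then have "g (rep ?z) = g (\<lambda>n. rep x n \<oplus> rep y n)"
    using rx ry by (intro g_adically_congruent) simp_all
  then show ?thesis
    unfolding g_completion_def using g_add[OF rx ry] by simp
qed

lemma g_completion_smult:
  assumes r: "r \<in> carrier R" and x: "x \<in> S_completion R S"
  shows "g_completion (compl_smult R S r x) = r \<otimes> g_completion x"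
proof -
  let ?z = "compl_smult R S r x"
  have rx: "\<And>n. rep x n \<in> carrier R"
    using rep_completion(1)[OF x] .
  have "rep ?z n \<in> carrier R \<and> rep ?z n \<ominus> r \<otimes> rep x n \<in> PIdl (chain n)" for n
  proof -
    interpret I: ideal "PIdl (chain n)" R by (rule chain_ideal)
    have z: "?z (chain n) = PIdl (chain n) <+> (\<lambda>a. r \<otimes> a) ` (PIdl (chain n) +> rep x n)"
      using rep_completion(2)[OF x, of n] chain_in_S[of n] by (simp add: compl_smult_def)
    have "r \<otimes> rep x n = \<zero> \<oplus> r \<otimes> rep x n"
      using r rx by simp
    also have "\<dots> \<in> ?z (chain n)"
      unfolding z set_add_def'
      by (intro UN_I[OF I.zero_closed] UN_I[OF imageI[OF I.a_rcos_self[OF rx]]]) simp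
    finally have "r \<otimes> rep x n \<in> ?z (chain n)" .
    moreover have "?z (chain n) \<subseteq> PIdl (chain n) +> r \<otimes> rep x n"
    proof
      fix w assume "w \<in> ?z (chain n)"
      then obtain h k where h: "h \<in> PIdl (chain n)"
        and k: "k \<in> (\<lambda>a. r \<otimes> a) ` (PIdl (chain n) +> rep x n)" and w: "w = h \<oplus> k"
        unfolding z set_add_def' by blast
      from k obtain h' where h': "h' \<in> PIdl (chain n)" and k': "k = r \<otimes> (h' \<oplus> rep x n)"
        unfolding a_r_coset_def' by blast
      have "w = (h \<oplus> r \<otimes> h') \<oplus> r \<otimes> rep x n"
        unfolding w k' using h h' r rx by (simp add: r_distr a_assoc)
      also have "\<dots> \<in> PIdl (chain n) +> r \<otimes> rep x n"
        using h h' r rx by (simp add: a_rcosI[OF _ cgenideal_subset[OF chain_closed]] I.I_l_closed)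
      finally show "w \<in> PIdl (chain n) +> r \<otimes> rep x n" .
    qed
    ultimately show ?thesis
      using rep_congruent[of "r \<otimes> rep x n" ?z n] r rx by simp
  qed
  then have "g (rep ?z) = g (\<lambda>n. r \<otimes> rep x n)"
    using r rx by (intro g_adically_congruent) simp_all
  then show ?thesis
    unfolding g_completion_def using g_smult[OF r rx] by simp
qed

lemma g_completion_zero:
  assumes x: "x \<in> S_completion R S"
  shows "g_completion x = \<zero>"
proof -
  have "g_completion \<in> S_completion R S \<rightarrow> carrier R"
    unfolding g_completion_def using g_closed[OF rep_completion(1)] by (rule Pi_I)
  with completion_dual_trivial show ?thesis
    unfolding hom_completion_zero_def using g_completion_add g_completion_smult x by metis
qed

lemma one_hat_completion: "(\<lambda>s\<in>S. PIdl s +> \<one>) \<in> S_completion R S"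
  unfolding S_completion_def
proof (intro CollectI conjI ballI impI)
  show "(\<lambda>s\<in>S. PIdl s +> \<one>) \<in> (\<Pi>\<^sub>E s\<in>S. a_rcosets (PIdl s))"
    using S_carrier cgenideal_subset by (auto intro!: a_rcosetsI)
  fix s t assume s: "s \<in> S" and t: "t \<in> S" and "\<exists>u\<in>carrier R. t = s \<otimes> u"
  then obtain u where "u \<in> carrier R" "t = u \<otimes> s"
    using S_carrier m_comm by blast
  then have "t \<in> PIdl s"
    by (auto simp: cgenideal_def)
  then have "PIdl t \<subseteq> PIdl s"
    using cgenideal_minimal[OF cgenideal_ideal] s S_carrier by blast
  then show "(\<lambda>s\<in>S. PIdl s +> \<one>) t \<subseteq> (\<lambda>s\<in>S. PIdl s +> \<one>) s"
    using s t unfolding a_r_coset_def' by auto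
qed

lemma g_const_one: "g (\<lambda>n. \<one>) = \<zero>"
proof -
  let ?one = "\<lambda>s\<in>S. PIdl s +> \<one>"
  have "rep ?one n \<in> carrier R \<and> rep ?one n \<ominus> \<one> \<in> PIdl (chain n)" for n
    using rep_coset[of \<one> ?one n] chain_in_S[of n] by simp
  then have "g (\<lambda>n. \<one>) = g_completion ?one"
    unfolding g_completion_def by (intro g_adically_congruent[symmetric]) simp_all
  also have "\<dots> = \<zero>"
    by (rule g_completion_zero[OF one_hat_completion])
  finally show ?thesis .
qed

end

lemma (in cotorsion_witness) seq_functional_const_one:
  assumes "seq_functional R g" "\<And>n. g (unit_seq R n) = \<zero>"
  shows "g (\<lambda>n. \<one>) = \<zero>"
proof -
  interpret unit_killing_functional R S g
    using assms by unfold_locales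
  show ?thesis by (rule g_const_one)
qed

section \<open>Choosing fresh pairs\<close>

text \<open>p n U is the n-th pair, chosen so as to avoid the set U of all entries of the earlier pairs.\<close>
primrec chosen_pairs :: "(nat \<Rightarrow> 'a set \<Rightarrow> 'a \<times> 'a) \<Rightarrow> nat \<Rightarrow> ('a \<times> 'a) list" where
  "chosen_pairs p 0 = []"
| "chosen_pairs p (Suc n) = chosen_pairs p n @
     [p n (fst ` set (chosen_pairs p n) \<union> snd ` set (chosen_pairs p n))]"

lemma set_chosen_pairs:
  "set (chosen_pairs p n) =
     (\<lambda>k. p k (fst ` set (chosen_pairs p k) \<union> snd ` set (chosen_pairs p k))) ` {..<n}"
  by (induction n) (simp_all add: lessThan_Suc Un_commute)

lemma fresh_pair_sequence:
  fixes P :: "nat \<Rightarrow> 'a \<Rightarrow> 'a \<Rightarrow> bool"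
  assumes fresh: "\<And>n U. finite U \<Longrightarrow> \<exists>x y. P n x y \<and> x \<notin> U \<and> y \<notin> U \<and> x \<noteq> y"
  shows "\<exists>f g. (\<forall>n. P n (f n) (g n)) \<and> inj f \<and> (\<forall>n k. f n \<noteq> g k)"
proof -
  define Q where "Q n U xy \<longleftrightarrow> P n (fst xy) (snd xy) \<and> fst xy \<notin> U \<and> snd xy \<notin> U \<and> fst xy \<noteq> snd xy"
    for n U xy
  define p where "p n U = (SOME xy. Q n U xy)" for n U
  have p: "Q n U (p n U)" if U: "finite U" for n U
  proof -
    obtain x y where "Q n U (x, y)"
      using fresh[OF U, of n] unfolding Q_def by auto
    then show ?thesis unfolding p_def by (rule someI)
  qed
  define used where "used k = fst ` set (chosen_pairs p k) \<union> snd ` set (chosen_pairs p k)" for k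
  define f where "f k = fst (p k (used k))" for k
  define g where "g k = snd (p k (used k))" for k
  have Q: "P n (f n) (g n) \<and> f n \<notin> used n \<and> g n \<notin> used n \<and> f n \<noteq> g n" for n
    using p[of "used n" n] unfolding f_def g_def Q_def used_def by simp
  have set_pairs: "set (chosen_pairs p n) = (\<lambda>k. p k (used k)) ` {..<n}" for n
    unfolding used_def by (rule set_chosen_pairs)
  have used: "used n = f ` {..<n} \<union> g ` {..<n}" for n
    by (auto simp: used_def[of n] set_pairs image_image f_def g_def)
  have distinct: "f k \<noteq> f n \<and> f k \<noteq> g n \<and> g k \<noteq> f n" if "k < n" for k n
  proof -
    have "f k \<in> f ` {..<n}" "g k \<in> g ` {..<n}" using that by auto
    with Q[of n, unfolded used] show ?thesis by auto
  qed
  have "inj f"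
  proof (rule injI)
    fix k n assume "f k = f n"
    then show "k = n" using distinct[of k n] distinct[of n k] by (cases k n rule: linorder_cases) auto
  qed
  moreover have "f n \<noteq> g k" for n k
    using distinct[of n k] distinct[of k n] Q[of n] by (cases n k rule: linorder_cases) auto
  ultimately show ?thesis
    using Q by (intro exI[of _ f] exI[of _ g]) simp
qed

section \<open>Modules of homomorphisms with a basis\<close>

locale free_hom_basis = M: module R M + N: module R N
  for R :: "'r ring" and M :: "('r, 'm) module" and N :: "('r, 'n) module" +
  fixes H :: "'h set" and G :: "'h \<Rightarrow> 'm \<Rightarrow> 'n" and gamma :: "('h \<Rightarrow> 'r) \<Rightarrow> 'm \<Rightarrow> 'n"
  assumes G_closed: "\<phi> \<in> H \<Longrightarrow> m \<in> carrier M \<Longrightarrow> G \<phi> m \<in> carrier N"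
    and gamma_eq: "gamma c =
      (\<lambda>m\<in>carrier M. finsum N (\<lambda>\<phi>. c \<phi> \<odot>\<^bsub>N\<^esub> G \<phi> m) {\<phi>\<in>H. c \<phi> \<noteq> \<zero>\<^bsub>R\<^esub>})"
    and gamma_bij: "bij_betw gamma (free_mod R H) (lin_hom R M N)"
begin

definition supp :: "('h \<Rightarrow> 'r) \<Rightarrow> 'h set" where
  "supp c = {\<phi>\<in>H. c \<phi> \<noteq> \<zero>\<^bsub>R\<^esub>}"

definition coeff_add :: "('h \<Rightarrow> 'r) \<Rightarrow> ('h \<Rightarrow> 'r) \<Rightarrow> 'h \<Rightarrow> 'r" where
  "coeff_add c c' = (\<lambda>\<phi>\<in>H. c \<phi> \<oplus>\<^bsub>R\<^esub> c' \<phi>)"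

definition coeff_smult :: "'r \<Rightarrow> ('h \<Rightarrow> 'r) \<Rightarrow> 'h \<Rightarrow> 'r" where
  "coeff_smult r c = (\<lambda>\<phi>\<in>H. r \<otimes>\<^bsub>R\<^esub> c \<phi>)"

lemma free_mod_closed: "c \<in> free_mod R H \<Longrightarrow> \<phi> \<in> H \<Longrightarrow> c \<phi> \<in> carrier R"
  by (auto simp: free_mod_def)

lemma finite_supp: "c \<in> free_mod R H \<Longrightarrow> finite (supp c)"
  by (simp add: free_mod_def supp_def)

lemma free_modI:
  "c \<in> H \<rightarrow>\<^sub>E carrier R \<Longrightarrow> supp c \<subseteq> T \<Longrightarrow> finite T \<Longrightarrow> c \<in> free_mod R H"
  unfolding free_mod_def supp_def using finite_subset by blast

lemma gamma_finsum:
  assumes c: "c \<in> free_mod R H" and T: "finite T" "supp c \<subseteq> T" "T \<subseteq> H" and m: "m \<in> carrier M"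
  shows "gamma c m = finsum N (\<lambda>\<phi>. c \<phi> \<odot>\<^bsub>N\<^esub> G \<phi> m) T"
proof -
  have "gamma c m = finsum N (\<lambda>\<phi>. c \<phi> \<odot>\<^bsub>N\<^esub> G \<phi> m) (supp c)"
    using m by (simp add: gamma_eq supp_def)
  also have "\<dots> = finsum N (\<lambda>\<phi>. c \<phi> \<odot>\<^bsub>N\<^esub> G \<phi> m) T"
    using T m free_mod_closed[OF c] G_closed
    by (intro N.add.finprod_mono_neutral_cong_left) (auto simp: supp_def)
  finally show ?thesis .
qed

lemma coeff_add_free:
  "c \<in> free_mod R H \<Longrightarrow> c' \<in> free_mod R H \<Longrightarrow> coeff_add c c' \<in> free_mod R H"
  by (rule free_modI[where T = "supp c \<union> supp c'"])
    (auto simp: coeff_add_def supp_def free_mod_def)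

lemma coeff_smult_free:
  "r \<in> carrier R \<Longrightarrow> c \<in> free_mod R H \<Longrightarrow> coeff_smult r c \<in> free_mod R H"
  by (rule free_modI[where T = "supp c"])
    (auto simp: coeff_smult_def supp_def free_mod_def)

lemma gamma_coeff_add:
  assumes c: "c \<in> free_mod R H" and c': "c' \<in> free_mod R H" and m: "m \<in> carrier M"
  shows "gamma (coeff_add c c') m = gamma c m \<oplus>\<^bsub>N\<^esub> gamma c' m"
proof -
  let ?T = "supp c \<union> supp c'"
  have T: "finite ?T" "?T \<subseteq> H"
    using finite_supp[OF c] finite_supp[OF c'] by (auto simp: supp_def)
  have "gamma (coeff_add c c') m = finsum N (\<lambda>\<phi>. coeff_add c c' \<phi> \<odot>\<^bsub>N\<^esub> G \<phi> m) ?T"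
    by (rule gamma_finsum[OF coeff_add_free[OF c c'] T(1) _ T(2) m])
      (auto simp: coeff_add_def supp_def)
  also have "\<dots> = finsum N (\<lambda>\<phi>. c \<phi> \<odot>\<^bsub>N\<^esub> G \<phi> m \<oplus>\<^bsub>N\<^esub> c' \<phi> \<odot>\<^bsub>N\<^esub> G \<phi> m) ?T"
    using T free_mod_closed[OF c] free_mod_closed[OF c'] G_closed m
    by (intro N.add.finprod_cong') (auto simp: coeff_add_def N.smult_l_distr)
  also have "\<dots> = finsum N (\<lambda>\<phi>. c \<phi> \<odot>\<^bsub>N\<^esub> G \<phi> m) ?T \<oplus>\<^bsub>N\<^esub> finsum N (\<lambda>\<phi>. c' \<phi> \<odot>\<^bsub>N\<^esub> G \<phi> m) ?T"
    using T free_mod_closed[OF c] free_mod_closed[OF c'] G_closed m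
    by (intro N.add.finprod_multf) auto
  also have "\<dots> = gamma c m \<oplus>\<^bsub>N\<^esub> gamma c' m"
    using gamma_finsum[OF c T(1) _ T(2) m] gamma_finsum[OF c' T(1) _ T(2) m] by auto
  finally show ?thesis .
qed

lemma gamma_coeff_smult:
  assumes r: "r \<in> carrier R" and c: "c \<in> free_mod R H" and m: "m \<in> carrier M"
  shows "gamma (coeff_smult r c) m = r \<odot>\<^bsub>N\<^esub> gamma c m"
proof -
  have T: "finite (supp c)" "supp c \<subseteq> H"
    using finite_supp[OF c] by (auto simp: supp_def)
  have "gamma (coeff_smult r c) m = finsum N (\<lambda>\<phi>. coeff_smult r c \<phi> \<odot>\<^bsub>N\<^esub> G \<phi> m) (supp c)"
    using r free_mod_closed[OF c]
    by (intro gamma_finsum[OF coeff_smult_free[OF r c] T(1) _ T(2) m]) (auto simp: coeff_smult_def supp_def)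
  also have "\<dots> = finsum N (\<lambda>\<phi>. r \<odot>\<^bsub>N\<^esub> (c \<phi> \<odot>\<^bsub>N\<^esub> G \<phi> m)) (supp c)"
    using T free_mod_closed[OF c] G_closed m r
    by (intro N.add.finprod_cong') (auto simp: coeff_smult_def N.smult_assoc1)
  also have "\<dots> = r \<odot>\<^bsub>N\<^esub> finsum N (\<lambda>\<phi>. c \<phi> \<odot>\<^bsub>N\<^esub> G \<phi> m) (supp c)"
    using T free_mod_closed[OF c] G_closed m r
    by (intro N.finsum_smult_ldistr[symmetric]) auto
  also have "\<dots> = r \<odot>\<^bsub>N\<^esub> gamma c m"
    using gamma_finsum[OF c T(1) _ T(2) m] by simp
  finally show ?thesis .
qed

definition coords :: "('m \<Rightarrow> 'n) \<Rightarrow> 'h \<Rightarrow> 'r" where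
  "coords = the_inv_into (free_mod R H) gamma"

lemma coords_free: "h \<in> lin_hom R M N \<Longrightarrow> coords h \<in> free_mod R H"
  unfolding coords_def using gamma_bij by (metis bij_betw_def the_inv_into_into order_refl)

lemma gamma_coords: "h \<in> lin_hom R M N \<Longrightarrow> gamma (coords h) = h"
  unfolding coords_def using gamma_bij by (metis bij_betw_def f_the_inv_into_f)

lemma coords_gamma: "c \<in> free_mod R H \<Longrightarrow> coords (gamma c) = c"
  unfolding coords_def using gamma_bij by (metis bij_betw_def the_inv_into_f_f)

lemma lin_hom_extensional: "h \<in> lin_hom R M N \<Longrightarrow> h \<in> extensional (carrier M)"
  by (auto simp: lin_hom_def PiE_def)

lemma coords_add:
  assumes h: "h \<in> lin_hom R M N" and h': "h' \<in> lin_hom R M N" and h'': "h'' \<in> lin_hom R M N"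
    and sum: "\<And>m. m \<in> carrier M \<Longrightarrow> h'' m = h m \<oplus>\<^bsub>N\<^esub> h' m"
  shows "coords h'' = coeff_add (coords h) (coords h')"
proof -
  have "gamma (coeff_add (coords h) (coords h')) = h''"
  proof (rule extensionalityI[OF _ lin_hom_extensional[OF h'']])
    show "gamma (coeff_add (coords h) (coords h')) \<in> extensional (carrier M)"
      by (simp add: gamma_eq)
    show "gamma (coeff_add (coords h) (coords h')) m = h'' m" if "m \<in> carrier M" for m
      using gamma_coeff_add[OF coords_free[OF h] coords_free[OF h'] that] sum[OF that]
      by (simp add: gamma_coords h h')
  qed
  then show ?thesis
    using coords_gamma[OF coeff_add_free[OF coords_free[OF h] coords_free[OF h']]] by simp
qed

lemma coords_smult:
  assumes r: "r \<in> carrier R" and h: "h \<in> lin_hom R M N" and h'': "h'' \<in> lin_hom R M N"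
    and prod: "\<And>m. m \<in> carrier M \<Longrightarrow> h'' m = r \<odot>\<^bsub>N\<^esub> h m"
  shows "coords h'' = coeff_smult r (coords h)"
proof -
  have "gamma (coeff_smult r (coords h)) = h''"
  proof (rule extensionalityI[OF _ lin_hom_extensional[OF h'']])
    show "gamma (coeff_smult r (coords h)) \<in> extensional (carrier M)"
      by (simp add: gamma_eq)
    show "gamma (coeff_smult r (coords h)) m = h'' m" if "m \<in> carrier M" for m
      using gamma_coeff_smult[OF r coords_free[OF h] that] prod[OF that]
      by (simp add: gamma_coords h)
  qed
  then show ?thesis
    using coords_gamma[OF coeff_smult_free[OF r coords_free[OF h]]] by simp
qed

end

lemma (in free_hom_basis) exists_separating_pairs:
  assumes M: "countable (carrier M)" and N: "countable (carrier N)" and H: "\<not> countable H"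
  shows "\<exists>b b' :: nat \<Rightarrow> 'h. (\<forall>n. b n \<in> H \<and> b' n \<in> H) \<and> inj b \<and> (\<forall>n k. b n \<noteq> b' k) \<and>
    (\<forall>m\<in>carrier M. \<exists>k. \<forall>n\<ge>k. G (b n) m = G (b' n) m)"
proof -
  define enum where "enum = from_nat_into (carrier M)"
  have enum_in: "enum i \<in> carrier M" for i
    unfolding enum_def using M.zero_closed by (auto intro: from_nat_into)
  define readings where "readings n \<phi> = map (\<lambda>i. G \<phi> (enum i)) [0..<n]" for n \<phi>
  have collision: "\<exists>x y. (x \<in> H \<and> y \<in> H \<and> readings n x = readings n y) \<and> x \<notin> U \<and> y \<notin> U \<and> x \<noteq> y"
    if U: "finite U" for n U
  proof (rule ccontr)
    assume "\<not> ?thesis"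
    then have inj: "inj_on (readings n) (H - U)" unfolding inj_on_def by blast
    have "readings n ` (H - U) \<subseteq> lists (carrier N)"
      unfolding readings_def using G_closed enum_in by auto
    then have "countable (readings n ` (H - U))"
      using countable_subset countable_lists[OF N] by blast
    then have "countable (H - U)"
      using countable_image_inj_on[OF _ inj] by blast
    then have "countable (H - U \<union> U)"
      by (rule countable_Un[OF _ countable_finite[OF U]])
    then show False
      using H countable_subset[of H "H - U \<union> U"] by blast
  qed
  obtain b b' where b: "\<And>n. b n \<in> H \<and> b' n \<in> H \<and> readings n (b n) = readings n (b' n)"
    and inj: "inj b" and disjoint: "\<forall>n k. b n \<noteq> b' k"
    using fresh_pair_sequence[of "\<lambda>n x y. x \<in> H \<and> y \<in> H \<and> readings n x = readings n y", OF collision]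
    by blast
  have agree: "\<exists>k. \<forall>n\<ge>k. G (b n) m = G (b' n) m" if m: "m \<in> carrier M" for m
  proof (intro exI allI impI)
    fix n assume "Suc (to_nat_on (carrier M) m) \<le> n"
    then have "G (b n) (enum (to_nat_on (carrier M) m)) = G (b' n) (enum (to_nat_on (carrier M) m))"
      using arg_cong[OF b[THEN conjunct2, THEN conjunct2], of "\<lambda>l. l ! to_nat_on (carrier M) m" n]
      by (simp add: readings_def)
    then show "G (b n) m = G (b' n) m"
      using M m by (simp add: enum_def)
  qed
  have "(\<forall>n. b n \<in> H \<and> b' n \<in> H) \<and> inj b \<and> (\<forall>n k. b n \<noteq> b' k) \<and>
    (\<forall>m\<in>carrier M. \<exists>k. \<forall>n\<ge>k. G (b n) m = G (b' n) m)"
    using b inj disjoint agree by simp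
  then show ?thesis by (intro exI[of _ b] exI[of _ b'])
qed

locale separating_pairs = free_hom_basis R M N H G gamma
  for R :: "'r ring" and M :: "('r, 'm) module" and N :: "('r, 'n) module"
    and H :: "'h set" and G gamma +
  fixes b b' :: "nat \<Rightarrow> 'h"
  assumes pairs_in_H: "b n \<in> H" "b' n \<in> H"
    and inj_b: "inj b" and b_neq_b': "b n \<noteq> b' k"
    and eventually_agree: "m \<in> carrier M \<Longrightarrow> \<exists>k. \<forall>n\<ge>k. G (b n) m = G (b' n) m"
begin

definition diff_coeffs :: "nat \<Rightarrow> 'h \<Rightarrow> 'r" where
  "diff_coeffs n = (\<lambda>\<phi>\<in>H. if \<phi> = b n then \<one>\<^bsub>R\<^esub> else if \<phi> = b' n then \<ominus>\<^bsub>R\<^esub> \<one>\<^bsub>R\<^esub> else \<zero>\<^bsub>R\<^esub>)"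

lemma diff_coeffs_free: "diff_coeffs n \<in> free_mod R H"
  by (rule free_modI[where T = "{b n, b' n}"]) (auto simp: diff_coeffs_def supp_def)

definition delta :: "nat \<Rightarrow> 'm \<Rightarrow> 'n" where
  "delta n = gamma (diff_coeffs n)"

lemma delta_lin_hom: "delta n \<in> lin_hom R M N"
  unfolding delta_def by (rule bij_betw_apply[OF gamma_bij diff_coeffs_free])

lemma delta_closed: "m \<in> carrier M \<Longrightarrow> delta n m \<in> carrier N"
  using delta_lin_hom[of n] by (auto simp: lin_hom_def)

lemma delta_add: "x \<in> carrier M \<Longrightarrow> y \<in> carrier M \<Longrightarrow> delta n (x \<oplus>\<^bsub>M\<^esub> y) = delta n x \<oplus>\<^bsub>N\<^esub> delta n y"
  using delta_lin_hom[of n] by (auto simp: lin_hom_def)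

lemma delta_smult: "r \<in> carrier R \<Longrightarrow> x \<in> carrier M \<Longrightarrow> delta n (r \<odot>\<^bsub>M\<^esub> x) = r \<odot>\<^bsub>N\<^esub> delta n x"
  using delta_lin_hom[of n] by (auto simp: lin_hom_def)

lemma delta_eq: assumes m: "m \<in> carrier M" shows "delta n m = G (b n) m \<ominus>\<^bsub>N\<^esub> G (b' n) m"
proof -
  have ne: "b n \<noteq> b' n" by (rule b_neq_b')
  have "delta n m = finsum N (\<lambda>\<phi>. diff_coeffs n \<phi> \<odot>\<^bsub>N\<^esub> G \<phi> m) {b n, b' n}"
    unfolding delta_def using pairs_in_H
    by (intro gamma_finsum[OF diff_coeffs_free _ _ _ m]) (auto simp: supp_def diff_coeffs_def)
  also have "\<dots> = diff_coeffs n (b n) \<odot>\<^bsub>N\<^esub> G (b n) m \<oplus>\<^bsub>N\<^esub> diff_coeffs n (b' n) \<odot>\<^bsub>N\<^esub> G (b' n) m"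
    using ne pairs_in_H m G_closed free_mod_closed[OF diff_coeffs_free] by (simp add: N.finsum_insert)
  also have "\<dots> = G (b n) m \<ominus>\<^bsub>N\<^esub> G (b' n) m"
    using ne pairs_in_H m G_closed by (simp add: diff_coeffs_def N.smult_l_minus N.minus_eq)
  finally show ?thesis .
qed

definition bound :: "'m \<Rightarrow> nat" where
  "bound m = (LEAST k. \<forall>n\<ge>k. G (b n) m = G (b' n) m)"

lemma delta_vanishes: assumes m: "m \<in> carrier M" and n: "bound m \<le> n" shows "delta n m = \<zero>\<^bsub>N\<^esub>"
proof -
  have "G (b n) m = G (b' n) m"
    using LeastI_ex[OF eventually_agree[OF m]] n unfolding bound_def by blast
  then show ?thesis
    using delta_eq[OF m] G_closed[OF pairs_in_H(2) m] by (simp add: N.r_neg N.minus_eq)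
qed

definition partial_sum :: "(nat \<Rightarrow> 'r) \<Rightarrow> nat \<Rightarrow> 'm \<Rightarrow> 'n" where
  "partial_sum a K m = finsum N (\<lambda>n. a n \<odot>\<^bsub>N\<^esub> delta n m) {..<K}"

text \<open>The series of the \<open>a n \<odot> delta n\<close>, a finite sum at each m since \<open>delta n m = \<zero>\<close>
  for \<open>n \<ge> bound m\<close>.\<close>
definition series :: "(nat \<Rightarrow> 'r) \<Rightarrow> 'm \<Rightarrow> 'n" where
  "series a = (\<lambda>m\<in>carrier M. partial_sum a (bound m) m)"

lemma partial_sum_closed:
  "(\<And>n. a n \<in> carrier R) \<Longrightarrow> m \<in> carrier M \<Longrightarrow> partial_sum a K m \<in> carrier N"
  unfolding partial_sum_def by (rule N.finsum_closed) (auto intro: delta_closed)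

lemma series_eq_partial_sum:
  assumes a: "\<And>n. a n \<in> carrier R" and m: "m \<in> carrier M" and K: "bound m \<le> K"
  shows "series a m = partial_sum a K m"
  using K
proof (induction K rule: dec_induct)
  case base
  then show ?case using m by (simp add: series_def)
next
  case (step K)
  have "partial_sum a (Suc K) m = a K \<odot>\<^bsub>N\<^esub> delta K m \<oplus>\<^bsub>N\<^esub> partial_sum a K m"
    unfolding partial_sum_def lessThan_Suc using a m by (intro N.finsum_insert) (auto intro: delta_closed)
  then show ?case
    using step delta_vanishes[OF m step(1)] partial_sum_closed[OF a m] a by simp
qed

lemma partial_sum_add_right:
  assumes a: "\<And>n. a n \<in> carrier R" and x: "x \<in> carrier M" and y: "y \<in> carrier M"
  shows "partial_sum a K (x \<oplus>\<^bsub>M\<^esub> y) = partial_sum a K x \<oplus>\<^bsub>N\<^esub> partial_sum a K y"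
proof -
  have "partial_sum a K (x \<oplus>\<^bsub>M\<^esub> y) = finsum N (\<lambda>n. a n \<odot>\<^bsub>N\<^esub> delta n x \<oplus>\<^bsub>N\<^esub> a n \<odot>\<^bsub>N\<^esub> delta n y) {..<K}"
    unfolding partial_sum_def using a x y
    by (intro N.add.finprod_cong') (auto simp: delta_add N.smult_r_distr delta_closed)
  also have "\<dots> = partial_sum a K x \<oplus>\<^bsub>N\<^esub> partial_sum a K y"
    unfolding partial_sum_def using a x y by (intro N.add.finprod_multf) (auto intro: delta_closed)
  finally show ?thesis .
qed

lemma partial_sum_smult_right:
  assumes a: "\<And>n. a n \<in> carrier R" and r: "r \<in> carrier R" and x: "x \<in> carrier M"
  shows "partial_sum a K (r \<odot>\<^bsub>M\<^esub> x) = r \<odot>\<^bsub>N\<^esub> partial_sum a K x"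
proof -
  have "a n \<odot>\<^bsub>N\<^esub> delta n (r \<odot>\<^bsub>M\<^esub> x) = r \<odot>\<^bsub>N\<^esub> (a n \<odot>\<^bsub>N\<^esub> delta n x)" for n
    using a r x by (simp add: delta_smult delta_closed N.smult_assoc1[symmetric] M.m_comm)
  then have "partial_sum a K (r \<odot>\<^bsub>M\<^esub> x) = finsum N (\<lambda>n. r \<odot>\<^bsub>N\<^esub> (a n \<odot>\<^bsub>N\<^esub> delta n x)) {..<K}"
    unfolding partial_sum_def by simp
  also have "\<dots> = r \<odot>\<^bsub>N\<^esub> partial_sum a K x"
    unfolding partial_sum_def using a r x
    by (intro N.finsum_smult_ldistr[symmetric]) (auto intro: delta_closed)
  finally show ?thesis .
qed

lemma series_lin_hom:
  assumes a: "\<And>n. a n \<in> carrier R"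
  shows "series a \<in> lin_hom R M N"
  unfolding lin_hom_def
proof (intro CollectI conjI ballI)
  show "series a \<in> carrier M \<rightarrow>\<^sub>E carrier N"
    unfolding series_def using partial_sum_closed[OF a] by auto
  show "series a (x \<oplus>\<^bsub>M\<^esub> y) = series a x \<oplus>\<^bsub>N\<^esub> series a y"
    if x: "x \<in> carrier M" and y: "y \<in> carrier M" for x y
  proof -
    define K where "K = bound x + bound y + bound (x \<oplus>\<^bsub>M\<^esub> y)"
    show ?thesis
      using series_eq_partial_sum[OF a, where K = K] partial_sum_add_right[OF a x y, where K = K] x y
      unfolding K_def by simp
  qed
  show "series a (r \<odot>\<^bsub>M\<^esub> x) = r \<odot>\<^bsub>N\<^esub> series a x"
    if r: "r \<in> carrier R" and x: "x \<in> carrier M" for r x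
  proof -
    define K where "K = bound x + bound (r \<odot>\<^bsub>M\<^esub> x)"
    show ?thesis
      using series_eq_partial_sum[OF a, where K = K] partial_sum_smult_right[OF a r x, where K = K] r x
      unfolding K_def by simp
  qed
qed

lemma series_add:
  assumes a: "\<And>n. a n \<in> carrier R" and a': "\<And>n. a' n \<in> carrier R" and m: "m \<in> carrier M"
  shows "series (\<lambda>n. a n \<oplus>\<^bsub>R\<^esub> a' n) m = series a m \<oplus>\<^bsub>N\<^esub> series a' m"
proof -
  have "series (\<lambda>n. a n \<oplus>\<^bsub>R\<^esub> a' n) m
      = finsum N (\<lambda>n. a n \<odot>\<^bsub>N\<^esub> delta n m \<oplus>\<^bsub>N\<^esub> a' n \<odot>\<^bsub>N\<^esub> delta n m) {..<bound m}"
    unfolding series_def partial_sum_def using a a' m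
    by (simp, intro N.add.finprod_cong') (auto simp: N.smult_l_distr delta_closed)
  also have "\<dots> = series a m \<oplus>\<^bsub>N\<^esub> series a' m"
    unfolding series_def partial_sum_def using a a' m by (simp, intro N.add.finprod_multf) (auto intro: delta_closed)
  finally show ?thesis .
qed

lemma series_smult:
  assumes a: "\<And>n. a n \<in> carrier R" and r: "r \<in> carrier R" and m: "m \<in> carrier M"
  shows "series (\<lambda>n. r \<otimes>\<^bsub>R\<^esub> a n) m = r \<odot>\<^bsub>N\<^esub> series a m"
proof -
  have "series (\<lambda>n. r \<otimes>\<^bsub>R\<^esub> a n) m = finsum N (\<lambda>n. r \<odot>\<^bsub>N\<^esub> (a n \<odot>\<^bsub>N\<^esub> delta n m)) {..<bound m}"
    unfolding series_def partial_sum_def using a r m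
    by (simp, intro N.add.finprod_cong') (auto simp: N.smult_assoc1 delta_closed)
  also have "\<dots> = r \<odot>\<^bsub>N\<^esub> series a m"
    unfolding series_def partial_sum_def using a r m
    by (simp, intro N.finsum_smult_ldistr[symmetric]) (auto intro: delta_closed)
  finally show ?thesis .
qed

lemma series_unit_seq: "series (unit_seq R n) = delta n"
proof (rule extensionalityI[OF _ lin_hom_extensional[OF delta_lin_hom]])
  show "series (unit_seq R n) \<in> extensional (carrier M)" by (simp add: series_def)
  fix m assume m: "m \<in> carrier M"
  define K where "K = bound m + Suc n"
  have "series (unit_seq R n) m = partial_sum (unit_seq R n) K m"
    by (rule series_eq_partial_sum[OF M.unit_seq_closed m]) (simp add: K_def)
  also have "\<dots> = finsum N (\<lambda>k. if n = k then delta k m else \<zero>\<^bsub>N\<^esub>) {..<K}"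
    unfolding partial_sum_def using m by (intro N.add.finprod_cong') (auto simp: unit_seq_def delta_closed)
  also have "\<dots> = delta n m"
    using m by (intro N.add.finprod_singleton) (auto simp: K_def delta_closed)
  finally show "series (unit_seq R n) m = delta n m" .
qed

definition defect :: "nat \<Rightarrow> (nat \<Rightarrow> 'r) \<Rightarrow> 'r" where
  "defect j a = coords (series a) (b j) \<ominus>\<^bsub>R\<^esub> a j"

lemma coords_series_closed: "(\<And>n. a n \<in> carrier R) \<Longrightarrow> coords (series a) (b j) \<in> carrier R"
  using free_mod_closed[OF coords_free[OF series_lin_hom] pairs_in_H(1)] .

lemma defect_functional: "seq_functional R (defect j)"
  unfolding seq_functional_def
proof (intro conjI ballI)
  fix a a' :: "nat \<Rightarrow> 'r" assume a: "a \<in> UNIV \<rightarrow> carrier R" and a': "a' \<in> UNIV \<rightarrow> carrier R"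
  then have aR: "\<And>n. a n \<in> carrier R" and a'R: "\<And>n. a' n \<in> carrier R" by auto
  show "defect j a \<in> carrier R"
    unfolding defect_def using coords_series_closed[OF aR] aR by simp
  have "coords (series (\<lambda>n. a n \<oplus>\<^bsub>R\<^esub> a' n)) = coeff_add (coords (series a)) (coords (series a'))"
    using aR a'R by (intro coords_add series_lin_hom series_add) auto
  then have "coords (series (\<lambda>n. a n \<oplus>\<^bsub>R\<^esub> a' n)) (b j)
      = coords (series a) (b j) \<oplus>\<^bsub>R\<^esub> coords (series a') (b j)"
    using pairs_in_H by (simp add: coeff_add_def)
  then show "defect j (\<lambda>n. a n \<oplus>\<^bsub>R\<^esub> a' n) = defect j a \<oplus>\<^bsub>R\<^esub> defect j a'"
    unfolding defect_def using coords_series_closed[OF aR] coords_series_closed[OF a'R] aR a'R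
    by simp algebra
next
  fix r and a :: "nat \<Rightarrow> 'r" assume r: "r \<in> carrier R" and a: "a \<in> UNIV \<rightarrow> carrier R"
  then have aR: "\<And>n. a n \<in> carrier R" by auto
  have "coords (series (\<lambda>n. r \<otimes>\<^bsub>R\<^esub> a n)) = coeff_smult r (coords (series a))"
    using aR r by (intro coords_smult series_lin_hom series_smult) auto
  then have "coords (series (\<lambda>n. r \<otimes>\<^bsub>R\<^esub> a n)) (b j) = r \<otimes>\<^bsub>R\<^esub> coords (series a) (b j)"
    using pairs_in_H by (simp add: coeff_smult_def)
  then show "defect j (\<lambda>n. r \<otimes>\<^bsub>R\<^esub> a n) = r \<otimes>\<^bsub>R\<^esub> defect j a"
    unfolding defect_def using coords_series_closed[OF aR] aR r
    by simp algebra
qed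

lemma defect_unit_seq: "defect j (unit_seq R n) = \<zero>\<^bsub>R\<^esub>"
proof -
  have "coords (series (unit_seq R n)) = diff_coeffs n"
    unfolding series_unit_seq delta_def by (rule coords_gamma[OF diff_coeffs_free])
  moreover have "diff_coeffs n (b j) = unit_seq R n j"
    using pairs_in_H b_neq_b' inj_eq[OF inj_b] by (simp add: diff_coeffs_def unit_seq_def)
  ultimately show ?thesis
    unfolding defect_def by (simp add: M.unit_seq_closed)
qed

lemma exists_defect_const_one: "\<exists>j. defect j (\<lambda>n. \<one>\<^bsub>R\<^esub>) = \<ominus>\<^bsub>R\<^esub> \<one>\<^bsub>R\<^esub>"
proof -
  have "finite (supp (coords (series (\<lambda>n. \<one>\<^bsub>R\<^esub>))))"
    by (simp add: finite_supp coords_free series_lin_hom)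
  then have "\<not> range b \<subseteq> supp (coords (series (\<lambda>n. \<one>\<^bsub>R\<^esub>)))"
    using inj_b finite_subset finite_imageD by blast
  then obtain j where "coords (series (\<lambda>n. \<one>\<^bsub>R\<^esub>)) (b j) = \<zero>\<^bsub>R\<^esub>"
    using pairs_in_H by (auto simp: supp_def)
  then show ?thesis
    unfolding defect_def by (intro exI[of _ j]) (simp add: a_minus_def)
qed

end

lemma (in separating_pairs) exists_unit_killing_functional:
  assumes "\<one>\<^bsub>R\<^esub> \<noteq> \<zero>\<^bsub>R\<^esub>"
  shows "\<exists>g. seq_functional R g \<and> (\<forall>n. g (unit_seq R n) = \<zero>\<^bsub>R\<^esub>) \<and> g (\<lambda>n. \<one>\<^bsub>R\<^esub>) \<noteq> \<zero>\<^bsub>R\<^esub>"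
proof -
  obtain j where "defect j (\<lambda>n. \<one>\<^bsub>R\<^esub>) = \<ominus>\<^bsub>R\<^esub> \<one>\<^bsub>R\<^esub>"
    using exists_defect_const_one by blast
  moreover have "\<ominus>\<^bsub>R\<^esub> \<one>\<^bsub>R\<^esub> \<noteq> \<zero>\<^bsub>R\<^esub>"
    using ring.minus_one_neq_zero[OF cring.axioms(1)[OF M.is_cring] assms] .
  ultimately show ?thesis
    using defect_functional defect_unit_seq by (intro exI[of _ "defect j"]) simp
qed

lemma (in free_hom_basis) exists_unit_killing_functional_if_countable:
  assumes "countable (carrier M)" "countable (carrier N)" "\<not> countable H" "\<one>\<^bsub>R\<^esub> \<noteq> \<zero>\<^bsub>R\<^esub>"
  shows "\<exists>g. seq_functional R g \<and> (\<forall>n. g (unit_seq R n) = \<zero>\<^bsub>R\<^esub>) \<and> g (\<lambda>n. \<one>\<^bsub>R\<^esub>) \<noteq> \<zero>\<^bsub>R\<^esub>"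
proof -
  obtain b b' :: "nat \<Rightarrow> 'h" where "\<forall>n. b n \<in> H \<and> b' n \<in> H" "inj b" "\<forall>n k. b n \<noteq> b' k"
    "\<forall>m\<in>carrier M. \<exists>k. \<forall>n\<ge>k. G (b n) m = G (b' n) m"
    using exists_separating_pairs[OF assms(1-3)] by blast
  then interpret separating_pairs R M N H G gamma b b'
    by (intro separating_pairs.intro separating_pairs_axioms.intro free_hom_basis_axioms) auto
  show ?thesis by (rule exists_unit_killing_functional[OF assms(4)])
qed

lemma almost_full_embedding_free_hom_basis:
  assumes "almost_full_embedding R C GO GM" "gX \<in> C" "gY \<in> C"
  shows "free_hom_basis R (GO gX) (GO gY) (graph_hom gX gY) (GM gX gY) (gamma_map R GO GM gX gY)"
proof -
  have is_functor: "graph_module_functor R C GO GM"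
    and bij: "bij_betw (gamma_map R GO GM gX gY) (free_mod R (graph_hom gX gY)) (lin_hom R (GO gX) (GO gY))"
    using assms unfolding almost_full_embedding_def by auto
  have "module R (GO gX)" "module R (GO gY)"
    using is_functor assms(2,3) unfolding graph_module_functor_def torsion_free_module_def by auto
  moreover have "GM gX gY \<phi> m \<in> carrier (GO gY)"
    if "\<phi> \<in> graph_hom gX gY" "m \<in> carrier (GO gX)" for \<phi> m
  proof -
    have "restrict (GM gX gY \<phi>) (carrier (GO gX)) \<in> lin_hom R (GO gX) (GO gY)"
      using is_functor assms(2,3) that(1) unfolding graph_module_functor_def by blast
    then show ?thesis using that(2) unfolding lin_hom_def by auto
  qed
  ultimately show ?thesis
    using bij by (intro free_hom_basis.intro free_hom_basis_axioms.intro) (auto simp: gamma_map_def)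
qed

theorem corollary3p19:
  fixes R :: "'r ring" and C :: "'v graph set"
    and GO :: "'v graph \<Rightarrow> ('r, 'm) module"
    and GM :: "'v graph \<Rightarrow> 'v graph \<Rightarrow> ('v \<Rightarrow> 'v) \<Rightarrow> 'm \<Rightarrow> 'm"
  assumes "cring R" and "countable (carrier R)" and "cotorsion_free R"
    and "almost_full_embedding R C GO GM"
    and "gX \<in> C" and "gY \<in> C"
    and "\<not> countable (graph_hom gX gY)"
  shows "\<not> countable (carrier (GO gX)) \<or> \<not> countable (carrier (GO gY))"
proof (rule ccontr)
  assume "\<not> ?thesis"
  then have countable: "countable (carrier (GO gX))" "countable (carrier (GO gY))" by auto
  obtain S where "countable S" "mult_subset R S" "S_reduced R S" "hom_completion_zero R S"
    using \<open>cotorsion_free R\<close> unfolding cotorsion_free_def by blast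
  then interpret cotorsion_witness R S
    using \<open>cring R\<close> by (intro cotorsion_witness.intro cotorsion_witness_axioms.intro)
  interpret free_hom_basis R "GO gX" "GO gY" "graph_hom gX gY" "GM gX gY" "gamma_map R GO GM gX gY"
    using almost_full_embedding_free_hom_basis assms(4-6) .
  obtain g where "seq_functional R g" "\<And>n. g (unit_seq R n) = \<zero>\<^bsub>R\<^esub>" "g (\<lambda>n. \<one>\<^bsub>R\<^esub>) \<noteq> \<zero>\<^bsub>R\<^esub>"
    using exists_unit_killing_functional_if_countable[OF countable assms(7) one_neq_zero] by blast
  then show False
    using seq_functional_const_one by blast
qed

end
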